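(* Consider the regular partially labeled binary broadcasting tree $\text{Tree}_{k=2}(\theta,d,\delta)$ rooted at $\rho$ (see context), with $0<\theta<1$, and assume $\delta d=O(1)$. Let $M_t(\ell_{T_{\leq t}(\rho)})$ be the message computed by the approximate message passing recursion in the context. Define $\mu_1=\theta\delta d\log\frac{1+\theta}{1-\theta}$, $\sigma_1^2=\delta d\log^2\frac{1+\theta}{1-\theta}$, $\alpha=(1-\delta)\theta^2 d$, and for $t\geq 2$ $$\mu_t=\mu_1+\alpha\mu_{t-1},\qquad \sigma_t^2=\sigma_1^2+\alpha\sigma_{t-1}^2+\alpha\mu_{t-1}^2.$$ Then explicitly $$\mu_t=\frac{\alpha^t-1}{\alpha-1}\mu_1,\qquad \sigma_t^2=\frac{\alpha^t-1}{\alpha-1}\sigma_1^2+\frac{\frac{\alpha^{2t}-\alpha^{t+1}+\alpha^t-\alpha}{\alpha-1}-2(t-1)\alpha^t}{(\alpha-1)^2}\mu_1^2.$$ Moreover, for any depth $t$ and $x>0$, conditionally on $\ell(\rho)=+$, $\mu_t-x\sigma_t\leq M_t(\ell_{T_{\leq t}(\rho)})\leq \mu_t+x\sigma_t$, and conditionally on $\ell(\rho)=-$, $-\mu_t-x\sigma_t\leq M_t(\ell_{T_{\leq t}(\rho)})\leq -\mu_t+x\sigma_t$, each with probability at least $1-2\exp(-x^2/2)$.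
   Context: $\text{Tree}_{k=2}(\theta,d,\delta)$ (regular version): a rooted tree in which every vertex has $d$ children, exactly $\delta d$ of which have revealed labels and $(1-\delta)d$ of which are unlabeled (assume these are integers). The root label $\ell(\rho)\in\{+,-\}$ is unrevealed. Labels are broadcast from parent to child: a child receives its parent's label with probability $\frac{1+\theta}{2}$ and the opposite label with probability $\frac{1-\theta}{2}$, independently. $\ell_{T_{\leq t}(\rho)}$ denotes the revealed labels in the depth-$t$ tree. AMP recursion: for an unlabeled vertex $v$, $M_0(v)=0$, $M_1(v)=(N_+(v)-N_-(v))\log\frac{1+\theta}{1-\theta}$, where $N_\pm(v)$ is the number of labeled children of $v$ with label $\pm$, and $M_i(v)=M_1(v)+\theta\sum_{u\text{ unlabeled child of }v}M_{i-1}(u)$, computed bottom-up from the depth-$t$ layer; the output label is $\operatorname{sgn}(M_t(\rho))$. *)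

theory Defs
  imports "HOL-Probability.Probability"
begin

text \<open>Vertices of the regular d-ary tree are paths from the root: lists of child indices
  (each < d).  Child j of a vertex is labeled (revealed) iff j < delta*d, otherwise unlabeled.
  Labels: True = +, False = -.\<close>

definition n_lab :: "real \<Rightarrow> nat \<Rightarrow> nat" where
  "n_lab \<delta> d = nat \<lfloor>\<delta> * real d\<rfloor>"

definition child_label :: "real \<Rightarrow> bool \<Rightarrow> bool pmf" where
  "child_label \<theta> s = map_pmf (\<lambda>b. if b then s else \<not> s) (bernoulli_pmf ((1 + \<theta>) / 2))"

text \<open>Joint law of the labels of the depth-t tree, given the root label s (broadcasting).
  Vertices outside the depth-t tree get the dummy value False.\<close>
fun broadcast :: "real \<Rightarrow> nat \<Rightarrow> nat \<Rightarrow> bool \<Rightarrow> (nat list \<Rightarrow> bool) pmf" where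
  "broadcast \<theta> d 0 s = return_pmf (\<lambda>v. if v = [] then s else False)"
| "broadcast \<theta> d (Suc t) s =
     map_pmf (\<lambda>f v. case v of [] \<Rightarrow> s | j # w \<Rightarrow> f j w)
       (Pi_pmf {..<d} (\<lambda>_. False) (\<lambda>j. bind_pmf (child_label \<theta> s) (\<lambda>c. broadcast \<theta> d t c)))"

definition amp_M1 :: "real \<Rightarrow> real \<Rightarrow> nat \<Rightarrow> (nat list \<Rightarrow> bool) \<Rightarrow> nat list \<Rightarrow> real" where
  "amp_M1 \<theta> \<delta> d L v =
     (real (card {j. j < n_lab \<delta> d \<and> L (v @ [j])}) - real (card {j. j < n_lab \<delta> d \<and> \<not> L (v @ [j])}))
       * ln ((1 + \<theta>) / (1 - \<theta>))"

fun amp_M :: "real \<Rightarrow> real \<Rightarrow> nat \<Rightarrow> nat \<Rightarrow> (nat list \<Rightarrow> bool) \<Rightarrow> nat list \<Rightarrow> real" where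
  "amp_M \<theta> \<delta> d 0 L v = 0"
| "amp_M \<theta> \<delta> d (Suc i) L v =
     amp_M1 \<theta> \<delta> d L v + \<theta> * (\<Sum>j\<in>{n_lab \<delta> d..<d}. amp_M \<theta> \<delta> d i L (v @ [j]))"

definition mu1 :: "real \<Rightarrow> real \<Rightarrow> nat \<Rightarrow> real" where
  "mu1 \<theta> \<delta> d = \<theta> * \<delta> * real d * ln ((1 + \<theta>) / (1 - \<theta>))"

definition sigma1_sq :: "real \<Rightarrow> real \<Rightarrow> nat \<Rightarrow> real" where
  "sigma1_sq \<theta> \<delta> d = \<delta> * real d * (ln ((1 + \<theta>) / (1 - \<theta>)))\<^sup>2"

definition amp_alpha :: "real \<Rightarrow> real \<Rightarrow> nat \<Rightarrow> real" where
  "amp_alpha \<theta> \<delta> d = (1 - \<delta>) * \<theta>\<^sup>2 * real d"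

text \<open>mu_t and sigma_t^2 for t >= 1 (value at t = 0 is an auxiliary 0, so that
  mu_1 = mu1 and sigma_1^2 = sigma1_sq and the recursions hold for t >= 2).\<close>
fun amp_mu :: "real \<Rightarrow> real \<Rightarrow> nat \<Rightarrow> nat \<Rightarrow> real" where
  "amp_mu \<theta> \<delta> d 0 = 0"
| "amp_mu \<theta> \<delta> d (Suc t) = mu1 \<theta> \<delta> d + amp_alpha \<theta> \<delta> d * amp_mu \<theta> \<delta> d t"

fun amp_sigma_sq :: "real \<Rightarrow> real \<Rightarrow> nat \<Rightarrow> nat \<Rightarrow> real" where
  "amp_sigma_sq \<theta> \<delta> d 0 = 0"
| "amp_sigma_sq \<theta> \<delta> d (Suc t) = sigma1_sq \<theta> \<delta> d + amp_alpha \<theta> \<delta> d * amp_sigma_sq \<theta> \<delta> d t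
     + amp_alpha \<theta> \<delta> d * (amp_mu \<theta> \<delta> d t)\<^sup>2"

end

theory Submission
  imports Defs
begin

text \<open>Write \<open>\<pm>\<close> for the sign of the root label and \<open>c = log((1+\<theta>)/(1-\<theta>))\<close>. A labeled
  child contributes \<open>c\<close> times the sign of its label, with mean \<open>\<theta> c(\<pm>1)\<close>, an unlabeled child contributes \<open>\<theta>\<close> times the message of an
  independent subtree whose root label has mean \<open>\<theta>(\<pm>1)\<close>. Induction on the depth shows that
  \<open>M\<^sub>t - (\<pm>\<mu>\<^sub>t)\<close> is sub-Gaussian with variance proxy \<open>\<sigma>\<^sub>t\<^sup>2\<close>: independence of the children
  factorises the moment generating function, and the random shift coming from each child label
  is controlled by Hoeffding's lemma for a two-point distribution. Chernoff's bound then gives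
  both tails.\<close>

section \<open>Moments\<close>

lemma amp_mu_closed_form:
  assumes "amp_alpha \<theta> \<delta> d \<noteq> 1"
  shows "amp_mu \<theta> \<delta> d t = (amp_alpha \<theta> \<delta> d ^ t - 1) / (amp_alpha \<theta> \<delta> d - 1) * mu1 \<theta> \<delta> d"
  using assms by (induction t) (simp_all add: field_simps)

lemma amp_sigma_sq_closed_form_step:
  fixes a A m s :: real and t :: nat
  assumes "a \<noteq> 1"
  shows "s + a * ((A - 1) / (a - 1) * s + ((A\<^sup>2 - a * A + A - a) / (a - 1) - 2 * (real t - 1) * A)
            / (a - 1)\<^sup>2 * m\<^sup>2) + a * ((A - 1) / (a - 1) * m)\<^sup>2
       = (a * A - 1) / (a - 1) * s + (((a * A)\<^sup>2 - a * (a * A) + a * A - a) / (a - 1)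
            - 2 * (real (Suc t) - 1) * (a * A)) / (a - 1)\<^sup>2 * m\<^sup>2"
proof -
  have "a - 1 \<noteq> 0" using assms by simp
  then show ?thesis
    by (simp add: divide_simps) (simp add: algebra_simps power2_eq_square)
qed

lemma amp_sigma_sq_closed_form:
  assumes "amp_alpha \<theta> \<delta> d \<noteq> 1"
  defines "a \<equiv> amp_alpha \<theta> \<delta> d"
  shows "amp_sigma_sq \<theta> \<delta> d t =
           (a ^ t - 1) / (a - 1) * sigma1_sq \<theta> \<delta> d
           + ((a ^ (2 * t) - a ^ (t + 1) + a ^ t - a) / (a - 1) - 2 * (real t - 1) * a ^ t)
             / (a - 1)\<^sup>2 * (mu1 \<theta> \<delta> d)\<^sup>2"
proof (induction t)
  case 0
  show ?case using assms by (simp add: field_simps)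
next
  case (Suc t)
  have powers: "a ^ (2 * t) = (a ^ t)\<^sup>2" "a ^ (t + 1) = a * a ^ t" "a ^ Suc t = a * a ^ t"
    "a ^ (2 * Suc t) = (a * a ^ t)\<^sup>2" "a ^ (Suc t + 1) = a * (a * a ^ t)"
    by (simp_all add: power_mult_distrib power_mult power2_eq_square)
  have unfold_Suc: "amp_sigma_sq \<theta> \<delta> d (Suc t)
      = sigma1_sq \<theta> \<delta> d + a * amp_sigma_sq \<theta> \<delta> d t + a * (amp_mu \<theta> \<delta> d t)\<^sup>2"
    by (simp add: a_def)
  show ?case
    unfolding unfold_Suc Suc amp_mu_closed_form[OF assms(1), folded a_def] powers
    by (rule amp_sigma_sq_closed_form_step[OF assms(1)[folded a_def]])
qed

lemma real_n_lab: "\<delta> * real d \<in> \<nat> \<Longrightarrow> real (n_lab \<delta> d) = \<delta> * real d"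
  by (auto simp: n_lab_def elim: Nats_cases)

lemma n_lab_le: "\<delta> \<le> 1 \<Longrightarrow> n_lab \<delta> d \<le> d"
proof -
  assume "\<delta> \<le> 1"
  then have "\<delta> * real d \<le> real d" using mult_right_mono[of \<delta> 1 "real d"] by simp
  then show ?thesis by (simp add: n_lab_def nat_le_iff floor_le_iff)
qed

lemma amp_mu_Suc_n_lab:
  assumes "\<delta> * real d \<in> \<nat>" "\<delta> \<le> 1"
  shows "amp_mu \<theta> \<delta> d (Suc t) = \<theta> * real (n_lab \<delta> d) * ln ((1 + \<theta>) / (1 - \<theta>))
           + \<theta>\<^sup>2 * real (d - n_lab \<delta> d) * amp_mu \<theta> \<delta> d t"
  using assms by (simp add: mu1_def amp_alpha_def real_n_lab n_lab_le of_nat_diff algebra_simps)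

lemma amp_sigma_sq_Suc_n_lab:
  assumes "\<delta> * real d \<in> \<nat>" "\<delta> \<le> 1"
  shows "amp_sigma_sq \<theta> \<delta> d (Suc t) = real (n_lab \<delta> d) * (ln ((1 + \<theta>) / (1 - \<theta>)))\<^sup>2
           + real (d - n_lab \<delta> d) * (\<theta>\<^sup>2 * amp_sigma_sq \<theta> \<delta> d t + \<theta>\<^sup>2 * (amp_mu \<theta> \<delta> d t)\<^sup>2)"
  using assms by (simp add: sigma1_sq_def amp_alpha_def real_n_lab n_lab_le of_nat_diff algebra_simps)

lemma amp_mu_eq_0: "mu1 \<theta> \<delta> d = 0 \<Longrightarrow> amp_mu \<theta> \<delta> d t = 0"
  by (induction t) simp_all

lemma amp_sigma_sq_nonneg:
  "0 \<le> amp_alpha \<theta> \<delta> d \<Longrightarrow> 0 \<le> sigma1_sq \<theta> \<delta> d \<Longrightarrow> 0 \<le> amp_sigma_sq \<theta> \<delta> d t"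
  by (induction t) simp_all

lemma sigma1_sq_le_amp_sigma_sq:
  "0 \<le> amp_alpha \<theta> \<delta> d \<Longrightarrow> 0 \<le> sigma1_sq \<theta> \<delta> d \<Longrightarrow> 1 \<le> t
     \<Longrightarrow> sigma1_sq \<theta> \<delta> d \<le> amp_sigma_sq \<theta> \<delta> d t"
  by (cases t) (simp_all add: amp_sigma_sq_nonneg)

definition sg :: "bool \<Rightarrow> real" where
  "sg b = (if b then 1 else -1)"

lemma card_diff_eq_sum_sg:
  fixes n :: nat
  shows "real (card {j. j < n \<and> P j}) - real (card {j. j < n \<and> \<not> P j}) = (\<Sum>j<n. sg (P j))"
proof (induction n)
  case (Suc n)
  have "{j. j < Suc n \<and> P j} = (if P n then insert n {j. j < n \<and> P j} else {j. j < n \<and> P j})"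
    "{j. j < Suc n \<and> \<not> P j} = (if P n then {j. j < n \<and> \<not> P j} else insert n {j. j < n \<and> \<not> P j})"
    by (auto simp: less_Suc_eq)
  with Suc show ?case by (simp add: sg_def)
qed simp

lemma amp_M_Cons: "amp_M \<theta> \<delta> d i L (j # w) = amp_M \<theta> \<delta> d i (\<lambda>u. L (j # u)) w"
  by (induction i arbitrary: w) (simp_all add: amp_M1_def)

lemma amp_M_Suc_root:
  "amp_M \<theta> \<delta> d (Suc t) L []
     = (\<Sum>j<n_lab \<delta> d. sg (L [j])) * ln ((1 + \<theta>) / (1 - \<theta>))
       + \<theta> * (\<Sum>j\<in>{n_lab \<delta> d..<d}. amp_M \<theta> \<delta> d t (\<lambda>w. L (j # w)) [])"
  by (simp add: amp_M1_def card_diff_eq_sum_sg amp_M_Cons)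

lemma amp_M_eq_0_if_no_labels: "n_lab \<delta> d = 0 \<Longrightarrow> amp_M \<theta> \<delta> d i L v = 0"
  by (induction i arbitrary: v) (simp_all add: amp_M1_def)

lemma centred_amp_M_Suc_eq_sum:
  fixes \<theta> \<delta> :: real
  assumes "\<delta> * real d \<in> \<nat>" "\<delta> \<le> 1"
  defines "n \<equiv> n_lab \<delta> d" and "c \<equiv> ln ((1 + \<theta>) / (1 - \<theta>))"
  shows "l * (amp_M \<theta> \<delta> d (Suc t) L [] - sg s * amp_mu \<theta> \<delta> d (Suc t))
       = (\<Sum>j<n. l * c * (sg (L [j]) - \<theta> * sg s))
         + (\<Sum>j\<in>{n..<d}. l * \<theta> * (amp_M \<theta> \<delta> d t (\<lambda>w. L (j # w)) [] - \<theta> * sg s * amp_mu \<theta> \<delta> d t))"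
  unfolding amp_M_Suc_root amp_mu_Suc_n_lab[OF assms(1,2)] n_def c_def
  by (simp add: sum_subtractf sum_distrib_left[symmetric] sum_distrib_right[symmetric] algebra_simps
      power2_eq_square)

section \<open>Sub-Gaussian moment generating function\<close>

lemma two_point_hoeffding_nonneg:
  fixes a \<theta> :: real
  assumes "0 \<le> a" "-1 \<le> \<theta>" "\<theta> \<le> 1"
  shows "(1 + \<theta>) / 2 * exp (a * (1 - \<theta>)) + (1 - \<theta>) / 2 * exp (- a * (1 + \<theta>)) \<le> exp (a\<^sup>2 / 2)"
proof -
  define p where "p = (1 + \<theta>) / 2"
  have p: "0 \<le> p" "p \<le> 1" using assms by (auto simp: p_def)
  have pos: "0 < 1 + p * (exp (2 * a) - 1)"
    using p assms by (intro add_pos_nonneg mult_nonneg_nonneg) auto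
  have "(1 + \<theta>) / 2 * exp (a * (1 - \<theta>)) + (1 - \<theta>) / 2 * exp (- a * (1 + \<theta>))
      = exp (- (2 * a) * p) * (1 + p * (exp (2 * a) - 1))"
  proof -
    have e1: "exp (a * (1 - \<theta>)) = exp (- (2 * a) * p) * exp (2 * a)"
      by (simp add: p_def mult_exp_exp field_simps)
    have e2: "exp (- a * (1 + \<theta>)) = exp (- (2 * a) * p)"
      by (simp add: p_def algebra_simps)
    define E where "E = exp (- (2 * a) * p)"
    show ?thesis unfolding e1 e2 E_def[symmetric] by (simp add: p_def field_simps)
  qed
  also have "\<dots> = exp (- (2 * a) * p + ln (1 + p * (exp (2 * a) - 1)))"
    using pos by (simp only: exp_add exp_ln)
  also have "\<dots> \<le> exp ((2 * a)\<^sup>2 / 8)"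
    using Hoeffdings_lemma_aux[of "2 * a" p] assms p by simp
  also have "(2 * a)\<^sup>2 / 8 = a\<^sup>2 / 2" by (simp add: power2_eq_square)
  finally show ?thesis .
qed

lemma two_point_hoeffding:
  fixes a \<theta> :: real
  assumes "-1 \<le> \<theta>" "\<theta> \<le> 1"
  shows "(1 + \<theta>) / 2 * exp (a * (1 - \<theta>)) + (1 - \<theta>) / 2 * exp (- a * (1 + \<theta>)) \<le> exp (a\<^sup>2 / 2)"
proof (cases "0 \<le> a")
  case True
  then show ?thesis using two_point_hoeffding_nonneg assms by blast
next
  case False
  then have "(1 - \<theta>) / 2 * exp (- a * (1 + \<theta>)) + (1 + \<theta>) / 2 * exp (a * (1 - \<theta>)) \<le> exp ((- a)\<^sup>2 / 2)"
    using two_point_hoeffding_nonneg[of "- a" "- \<theta>"] assms by (simp add: algebra_simps)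
  then show ?thesis by simp
qed

lemma expectation_bind_pmf_finite:
  fixes h :: "'b \<Rightarrow> real"
  assumes "finite (set_pmf p)" "\<And>x. x \<in> set_pmf p \<Longrightarrow> finite (set_pmf (q x))"
  shows "measure_pmf.expectation (bind_pmf p q) h
       = measure_pmf.expectation p (\<lambda>x. measure_pmf.expectation (q x) h)"
  using assms by (simp add: pmf_expectation_bind[of "set_pmf p"] integral_measure_pmf[of "set_pmf p"])

lemma expectation_child_label:
  fixes g :: "bool \<Rightarrow> real"
  assumes "-1 \<le> \<theta>" "\<theta> \<le> 1"
  shows "measure_pmf.expectation (child_label \<theta> s) g = (1 + \<theta>) / 2 * g s + (1 - \<theta>) / 2 * g (\<not> s)"
  using assms by (simp add: child_label_def field_simps)

lemma finite_set_pmf_child_label: "finite (set_pmf (child_label \<theta> s))"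
  by (rule finite_subset[of _ UNIV]) auto

lemma finite_set_pmf_broadcast: "finite (set_pmf (broadcast \<theta> d t s))"
proof (induction t arbitrary: s)
  case (Suc t)
  then show ?case
    by (auto simp: set_Pi_pmf finite_set_pmf_child_label intro!: finite_PiE_dflt)
qed simp

lemma root_label_broadcast: "L \<in> set_pmf (broadcast \<theta> d t s) \<Longrightarrow> L [] = s"
  by (cases t) auto

lemma expectation_child_label_bind_exp_le:
  fixes P :: "bool \<Rightarrow> 'a pmf" and X :: "'a \<Rightarrow> real"
  assumes "-1 \<le> \<theta>" "\<theta> \<le> 1" "\<And>c. finite (set_pmf (P c))"
    and mgf: "\<And>c. measure_pmf.expectation (P c) (\<lambda>h. exp (b * (X h - sg c * m))) \<le> B"
  shows "measure_pmf.expectation (bind_pmf (child_label \<theta> s) P) (\<lambda>h. exp (b * (X h - \<theta> * sg s * m)))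
       \<le> exp ((b * m)\<^sup>2 / 2) * B"
proof -
  have "0 \<le> measure_pmf.expectation (P s) (\<lambda>h. exp (b * (X h - sg s * m)))"
    by (simp add: Bochner_Integration.integral_nonneg)
  with mgf[of s] have B: "0 \<le> B" by linarith
  have shift: "measure_pmf.expectation (P c) (\<lambda>h. exp (b * (X h - \<theta> * sg s * m)))
      = exp (b * m * (sg c - \<theta> * sg s)) * measure_pmf.expectation (P c) (\<lambda>h. exp (b * (X h - sg c * m)))" for c
    by (simp add: mult_exp_exp algebra_simps flip: integral_mult_right_zero)
  have "measure_pmf.expectation (bind_pmf (child_label \<theta> s) P) (\<lambda>h. exp (b * (X h - \<theta> * sg s * m)))
      = (1 + \<theta>) / 2 * exp (b * m * (sg s - \<theta> * sg s)) * measure_pmf.expectation (P s) (\<lambda>h. exp (b * (X h - sg s * m)))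
        + (1 - \<theta>) / 2 * exp (b * m * (sg (\<not> s) - \<theta> * sg s))
          * measure_pmf.expectation (P (\<not> s)) (\<lambda>h. exp (b * (X h - sg (\<not> s) * m)))"
    using assms by (simp add: expectation_bind_pmf_finite finite_set_pmf_child_label expectation_child_label shift)
  also have "\<dots> \<le> (1 + \<theta>) / 2 * exp (b * m * (sg s - \<theta> * sg s)) * B
                  + (1 - \<theta>) / 2 * exp (b * m * (sg (\<not> s) - \<theta> * sg s)) * B"
    using assms by (intro add_mono mult_left_mono mgf) auto
  also have "\<dots> \<le> exp ((b * m)\<^sup>2 / 2) * B"
  proof -
    have "(1 + \<theta>) / 2 * exp (b * m * (sg s - \<theta> * sg s)) + (1 - \<theta>) / 2 * exp (b * m * (sg (\<not> s) - \<theta> * sg s))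
        \<le> exp ((b * m)\<^sup>2 / 2)"
      using two_point_hoeffding[OF assms(1,2), of "sg s * b * m"] by (cases s) (simp_all add: sg_def algebra_simps)
    from mult_right_mono[OF this B] show ?thesis by (simp add: algebra_simps)
  qed
  finally show ?thesis .
qed

lemma expectation_child_root_label_exp_le:
  assumes "-1 \<le> \<theta>" "\<theta> \<le> 1"
  shows "measure_pmf.expectation (bind_pmf (child_label \<theta> s) (broadcast \<theta> d t))
           (\<lambda>h. exp (b * (sg (h []) - \<theta> * sg s))) \<le> exp (b\<^sup>2 / 2)"
proof -
  have "measure_pmf.expectation (broadcast \<theta> d t c) (\<lambda>h. exp (b * (sg (h []) - sg c * 1)))
      = measure_pmf.expectation (broadcast \<theta> d t c) (\<lambda>_. 1)" for c
    by (intro integral_cong_AE) (auto simp: AE_measure_pmf_iff root_label_broadcast)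
  then show ?thesis
    using expectation_child_label_bind_exp_le[OF assms finite_set_pmf_broadcast,
        where b = b and X = "\<lambda>h. sg (h [])" and m = 1 and B = 1] by simp
qed

lemma expectation_broadcast_Suc_prod:
  fixes g :: "nat \<Rightarrow> (nat list \<Rightarrow> bool) \<Rightarrow> real"
  assumes "\<And>j h. 0 \<le> g j h"
  shows "measure_pmf.expectation (broadcast \<theta> d (Suc t) s) (\<lambda>L. \<Prod>j<d. g j (\<lambda>w. L (j # w)))
       = (\<Prod>j<d. measure_pmf.expectation (bind_pmf (child_label \<theta> s) (broadcast \<theta> d t)) (g j))"
proof -
  have "finite (set_pmf (bind_pmf (child_label \<theta> s) (broadcast \<theta> d t)))"
    by (simp add: finite_set_pmf_child_label finite_set_pmf_broadcast)
  then show ?thesis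
    using assms by (simp add: expectation_prod_Pi_pmf integrable_measure_pmf_finite)
qed

lemma prod_lessThan_if_split:
  fixes a b :: "nat \<Rightarrow> 'a::comm_monoid_mult"
  assumes "n \<le> d"
  shows "(\<Prod>j<d. if j < n then a j else b j) = (\<Prod>j<n. a j) * (\<Prod>j\<in>{n..<d}. b j)"
proof -
  have "{..<d} \<inter> {j. j < n} = {..<n}" "{..<d} \<inter> - {j. j < n} = {n..<d}"
    using assms by auto
  then show ?thesis by (simp add: prod.If_cases)
qed

lemma amp_M_centred_mgf_le:
  assumes "\<bar>\<theta>\<bar> \<le> 1" "\<delta> * real d \<in> \<nat>" "\<delta> \<le> 1"
  shows "measure_pmf.expectation (broadcast \<theta> d t s)
           (\<lambda>L. exp (l * (amp_M \<theta> \<delta> d t L [] - sg s * amp_mu \<theta> \<delta> d t)))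
         \<le> exp (l\<^sup>2 * amp_sigma_sq \<theta> \<delta> d t / 2)"
proof (induction t arbitrary: l s)
  case (Suc t)
  define n where "n = n_lab \<delta> d"
  define c where "c = ln ((1 + \<theta>) / (1 - \<theta>))"
  define \<mu> where "\<mu> = amp_mu \<theta> \<delta> d t"
  define \<sigma>2 where "\<sigma>2 = amp_sigma_sq \<theta> \<delta> d t"
  define Q where "Q = bind_pmf (child_label \<theta> s) (broadcast \<theta> d t)"
  define F where "F = (\<lambda>j h. if j < n then exp (l * c * (sg (h []) - \<theta> * sg s))
                           else exp (l * \<theta> * (amp_M \<theta> \<delta> d t h [] - \<theta> * sg s * \<mu>)))"
  have n: "n \<le> d" using n_lab_le[OF assms(3)] by (simp add: n_def)
  have \<theta>: "-1 \<le> \<theta>" "\<theta> \<le> 1" using assms(1) by auto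
  have labeled: "measure_pmf.expectation Q (\<lambda>h. exp (l * c * (sg (h []) - \<theta> * sg s)))
      \<le> exp ((l * c)\<^sup>2 / 2)"
    unfolding Q_def using \<theta> by (rule expectation_child_root_label_exp_le)
  have unlabeled: "measure_pmf.expectation Q (\<lambda>h. exp (l * \<theta> * (amp_M \<theta> \<delta> d t h [] - \<theta> * sg s * \<mu>)))
      \<le> exp ((l * \<theta> * \<mu>)\<^sup>2 / 2) * exp ((l * \<theta>)\<^sup>2 * \<sigma>2 / 2)"
    unfolding Q_def \<sigma>2_def \<mu>_def
    by (rule expectation_child_label_bind_exp_le[OF \<theta> finite_set_pmf_broadcast Suc.IH])
  have "measure_pmf.expectation (broadcast \<theta> d (Suc t) s)
           (\<lambda>L. exp (l * (amp_M \<theta> \<delta> d (Suc t) L [] - sg s * amp_mu \<theta> \<delta> d (Suc t))))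
      = measure_pmf.expectation (broadcast \<theta> d (Suc t) s) (\<lambda>L. \<Prod>j<d. F j (\<lambda>w. L (j # w)))"
    unfolding centred_amp_M_Suc_eq_sum[OF assms(2,3)] F_def prod_lessThan_if_split[OF n]
    by (simp add: exp_add exp_sum n_def c_def \<mu>_def)
  also have "\<dots> = (\<Prod>j<d. measure_pmf.expectation Q (F j))"
    unfolding Q_def by (rule expectation_broadcast_Suc_prod) (simp add: F_def)
  also have "\<dots> \<le> (\<Prod>j<d. if j < n then exp ((l * c)\<^sup>2 / 2)
                      else exp ((l * \<theta> * \<mu>)\<^sup>2 / 2) * exp ((l * \<theta>)\<^sup>2 * \<sigma>2 / 2))"
    using labeled unlabeled
    by (intro prod_mono) (auto simp: F_def Bochner_Integration.integral_nonneg)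
  also have "\<dots> = exp (l\<^sup>2 * amp_sigma_sq \<theta> \<delta> d (Suc t) / 2)"
    unfolding prod_lessThan_if_split[OF n] amp_sigma_sq_Suc_n_lab[OF assms(2,3)]
    by (simp add: n_def c_def \<mu>_def \<sigma>2_def exp_of_nat_mult[symmetric] mult_exp_exp
        power_mult_distrib algebra_simps add_divide_distrib)
  finally show ?case .
qed simp

section \<open>Tail bounds\<close>

lemma subgaussian_upper_tail:
  fixes X :: "'a \<Rightarrow> real"
  assumes int: "\<And>l. integrable (measure_pmf p) (\<lambda>y. exp (l * X y))"
    and mgf: "\<And>l. measure_pmf.expectation p (\<lambda>y. exp (l * X y)) \<le> exp (l\<^sup>2 * v / 2)"
    and "0 < v" "0 < x"
  shows "measure_pmf.prob p {y. x * sqrt v \<le> X y} \<le> exp (- x\<^sup>2 / 2)"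
proof -
  define l where "l = x / sqrt v"
  have l: "0 < l" using assms by (simp add: l_def)
  have "measure_pmf.prob p {y \<in> UNIV. x * sqrt v \<le> X y}
      \<le> exp (- l * (x * sqrt v)) * (\<integral>y\<in>UNIV. exp (l * X y) \<partial>p)"
    by (rule measure_pmf.Chernoff_ineq_ge[OF l]) (auto simp: set_integrable_def int)
  also have "\<dots> \<le> exp (- l * (x * sqrt v)) * exp (l\<^sup>2 * v / 2)"
    using set_integral_space[OF int[of l]] by (simp add: mgf)
  also have "\<dots> = exp (- x\<^sup>2 / 2)"
    using assms by (simp add: mult_exp_exp l_def power2_eq_square field_simps)
  finally show ?thesis by simp
qed

lemma subgaussian_two_sided_tail:
  fixes X :: "'a \<Rightarrow> real"
  assumes int: "\<And>l. integrable (measure_pmf p) (\<lambda>y. exp (l * X y))"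
    and mgf: "\<And>l. measure_pmf.expectation p (\<lambda>y. exp (l * X y)) \<le> exp (l\<^sup>2 * v / 2)"
    and "0 < v" "0 < x"
  shows "measure_pmf.prob p {y. \<bar>X y\<bar> \<le> x * sqrt v} \<ge> 1 - 2 * exp (- x\<^sup>2 / 2)"
proof -
  have upper: "measure_pmf.prob p {y. x * sqrt v \<le> X y} \<le> exp (- x\<^sup>2 / 2)"
    using subgaussian_upper_tail[OF int mgf assms(3,4)] .
  have lower: "measure_pmf.prob p {y. x * sqrt v \<le> - X y} \<le> exp (- x\<^sup>2 / 2)"
    using subgaussian_upper_tail[of p "\<lambda>y. - X y" v x] int[of "- _"] mgf[of "- _"] assms(3,4) by simp
  have "measure_pmf.prob p (- {y. \<bar>X y\<bar> \<le> x * sqrt v})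
      \<le> measure_pmf.prob p ({y. x * sqrt v \<le> X y} \<union> {y. x * sqrt v \<le> - X y})"
    by (intro measure_pmf.finite_measure_mono) auto
  also have "\<dots> \<le> measure_pmf.prob p {y. x * sqrt v \<le> X y} + measure_pmf.prob p {y. x * sqrt v \<le> - X y}"
    by (rule measure_subadditive) auto
  finally show ?thesis
    using upper lower measure_pmf.prob_compl[of "{y. \<bar>X y\<bar> \<le> x * sqrt v}" p] by (simp add: Compl_eq_Diff_UNIV)
qed

lemma amp_M_concentration:
  assumes "0 < \<theta>" "\<theta> < 1" "\<delta> * real d \<in> \<nat>" "\<delta> \<le> 1" "1 \<le> t" "0 < x"
  shows "measure_pmf.prob (broadcast \<theta> d t s)
           {L. \<bar>amp_M \<theta> \<delta> d t L [] - sg s * amp_mu \<theta> \<delta> d t\<bar> \<le> x * sqrt (amp_sigma_sq \<theta> \<delta> d t)}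
         \<ge> 1 - 2 * exp (- x\<^sup>2 / 2)"
proof -
  have c: "0 < ln ((1 + \<theta>) / (1 - \<theta>))" using assms(1,2) by simp
  have \<alpha>: "0 \<le> amp_alpha \<theta> \<delta> d" using assms(4) by (simp add: amp_alpha_def)
  have \<sigma>1: "sigma1_sq \<theta> \<delta> d = real (n_lab \<delta> d) * (ln ((1 + \<theta>) / (1 - \<theta>)))\<^sup>2"
    using assms(3) by (simp add: sigma1_sq_def real_n_lab)
  show ?thesis
  proof (cases "n_lab \<delta> d = 0")
    case True
    then have "amp_mu \<theta> \<delta> d t = 0"
      using real_n_lab[OF assms(3)] by (intro amp_mu_eq_0) (simp add: mu1_def)
    moreover have "0 \<le> amp_sigma_sq \<theta> \<delta> d t"
      using \<alpha> \<sigma>1 by (intro amp_sigma_sq_nonneg) auto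
    ultimately show ?thesis
      using assms(6) by (simp add: amp_M_eq_0_if_no_labels[OF True])
  next
    case False
    then have "0 < sigma1_sq \<theta> \<delta> d" using c \<sigma>1 by simp
    then have "0 < amp_sigma_sq \<theta> \<delta> d t"
      using sigma1_sq_le_amp_sigma_sq[OF \<alpha> _ assms(5)] by fastforce
    then show ?thesis
      using assms(1,2,3,4,6)
      by (intro subgaussian_two_sided_tail integrable_measure_pmf_finite finite_set_pmf_broadcast
          amp_M_centred_mgf_le) auto
  qed
qed

theorem theorem2:
  fixes \<theta> \<delta> :: real and d t :: nat and x :: real
  assumes "0 < \<theta>" and "\<theta> < 1"
    and "0 \<le> \<delta>" and "\<delta> \<le> 1"
    and "\<delta> * real d \<in> \<nat>"
    and "1 \<le> t" and "0 < x"
  defines "\<alpha> \<equiv> amp_alpha \<theta> \<delta> d"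
    and "\<mu> \<equiv> amp_mu \<theta> \<delta> d t"
    and "\<sigma> \<equiv> sqrt (amp_sigma_sq \<theta> \<delta> d t)"
  shows "(\<alpha> \<noteq> 1 \<longrightarrow>
            \<mu> = (\<alpha> ^ t - 1) / (\<alpha> - 1) * mu1 \<theta> \<delta> d \<and>
            amp_sigma_sq \<theta> \<delta> d t =
              (\<alpha> ^ t - 1) / (\<alpha> - 1) * sigma1_sq \<theta> \<delta> d
              + ((\<alpha> ^ (2 * t) - \<alpha> ^ (t + 1) + \<alpha> ^ t - \<alpha>) / (\<alpha> - 1) - 2 * (real t - 1) * \<alpha> ^ t)
                / (\<alpha> - 1)\<^sup>2 * (mu1 \<theta> \<delta> d)\<^sup>2)
       \<and> measure_pmf.prob (broadcast \<theta> d t True)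
            {L. \<mu> - x * \<sigma> \<le> amp_M \<theta> \<delta> d t L [] \<and> amp_M \<theta> \<delta> d t L [] \<le> \<mu> + x * \<sigma>}
           \<ge> 1 - 2 * exp (- x\<^sup>2 / 2)
       \<and> measure_pmf.prob (broadcast \<theta> d t False)
            {L. - \<mu> - x * \<sigma> \<le> amp_M \<theta> \<delta> d t L [] \<and> amp_M \<theta> \<delta> d t L [] \<le> - \<mu> + x * \<sigma>}
           \<ge> 1 - 2 * exp (- x\<^sup>2 / 2)"
proof -
  have intervals: "{L. \<mu> - x * \<sigma> \<le> amp_M \<theta> \<delta> d t L [] \<and> amp_M \<theta> \<delta> d t L [] \<le> \<mu> + x * \<sigma>}
      = {L. \<bar>amp_M \<theta> \<delta> d t L [] - sg True * \<mu>\<bar> \<le> x * \<sigma>}"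
    "{L. - \<mu> - x * \<sigma> \<le> amp_M \<theta> \<delta> d t L [] \<and> amp_M \<theta> \<delta> d t L [] \<le> - \<mu> + x * \<sigma>}
      = {L. \<bar>amp_M \<theta> \<delta> d t L [] - sg False * \<mu>\<bar> \<le> x * \<sigma>}"
    by (auto simp: sg_def abs_le_iff)
  show ?thesis
    unfolding intervals
    using amp_mu_closed_form[of \<theta> \<delta> d t, folded \<alpha>_def \<mu>_def]
      amp_sigma_sq_closed_form[of \<theta> \<delta> d t, folded \<alpha>_def]
      amp_M_concentration[OF assms(1,2,5,4,6,7), folded \<mu>_def \<sigma>_def] by simp
qed

end
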